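(* Fix amplitudes $\overline r_{j,\mathrm{eq}}>0$ and consider the decoupled phase dynamics $$\frac{d\overline\theta_j}{dt}=\frac{\kappa_j}{2C\,\overline r_{j,\mathrm{eq}}}\Big(\iota_j\sin(\overline\theta_j-\gamma_j)-\sum_{\ell\ne j}g_{j\ell}\overline r_{\ell,\mathrm{eq}}\sin(\overline\theta_j-\overline\theta_\ell)\Big),\quad j=1,\dots,N.$$ Assume there is an equilibrium $\overline\theta_{\mathrm{eq}}$ such that $|\overline\theta_{j,\mathrm{eq}}-\overline\theta_{\ell,\mathrm{eq}}|<\pi/2$ and $|\overline\theta_{j,\mathrm{eq}}-\gamma_j|>\pi/2$ for all $j,\ell$ (angle differences measured on the circle, so the latter means $\cos(\overline\theta_{j,\mathrm{eq}}-\gamma_j)<0$). (i) If at least one $\iota_j>0$ (at least one constant-current load), then $\overline\theta_{\mathrm{eq}}$ is locally exponentially stable. (ii) If $\iota_j=0$ for all $j$, then the phase-synchronized equilibrium manifold $\{\overline\theta:\overline\theta_j=\overline\theta_\ell\ \forall j,\ell\}$ is locally exponentially stable.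
   Context: $C>0$, $\kappa_j>0$. Network: a real symmetric $N\times N$ Kron-reduced conductance matrix with off-diagonal entries $-g_{j\ell}$, $g_{j\ell}=g_{\ell j}\ge0$, whose associated graph (edges where $g_{j\ell}>0$) is connected. $\iota_j\ge 0$ and $\gamma_j\in\mathbb R$ are the amplitude and phase offset of an equivalent constant current source at node $j$. Phases live on the torus $\mathbb T^N$. *)

theory Defs
  imports "HOL-Analysis.Analysis"
begin

text \<open>Right-hand side of the decoupled phase dynamics (phases lifted to real^'n).\<close>
definition phase_field ::
  "real \<Rightarrow> ('n::finite \<Rightarrow> real) \<Rightarrow> ('n \<Rightarrow> real) \<Rightarrow> ('n \<Rightarrow> 'n \<Rightarrow> real)
   \<Rightarrow> ('n \<Rightarrow> real) \<Rightarrow> ('n \<Rightarrow> real) \<Rightarrow> real^'n \<Rightarrow> real^'n" where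
  "phase_field C \<kappa> r g \<iota> \<gamma> \<theta> =
     (\<chi> j. \<kappa> j / (2 * C * r j) *
        (\<iota> j * sin (\<theta>$j - \<gamma> j)
         - (\<Sum>l\<in>UNIV - {j}. g j l * r l * sin (\<theta>$j - \<theta>$l))))"

definition solves_on :: "('a::real_normed_vector \<Rightarrow> 'a) \<Rightarrow> (real \<Rightarrow> 'a) \<Rightarrow> real \<Rightarrow> bool" where
  "solves_on f x T \<longleftrightarrow>
     (\<forall>t\<in>{0..<T}. (x has_vector_derivative f (x t)) (at t within {0..<T}))"

definition loc_exp_stable_set :: "('a::real_normed_vector \<Rightarrow> 'a) \<Rightarrow> 'a set \<Rightarrow> bool" where
  "loc_exp_stable_set f S \<longleftrightarrow>
     (\<exists>\<delta>>0. \<exists>M. \<exists>a>0. \<forall>x T. T > 0 \<and> solves_on f x T \<and> infdist (x 0) S < \<delta> \<longrightarrow>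
        (\<forall>t\<in>{0..<T}. infdist (x t) S \<le> M * exp (- a * t) * infdist (x 0) S))"

definition loc_exp_stable_point :: "('a::real_normed_vector \<Rightarrow> 'a) \<Rightarrow> 'a \<Rightarrow> bool" where
  "loc_exp_stable_point f p \<longleftrightarrow>
     (\<exists>\<delta>>0. \<exists>M. \<exists>a>0. \<forall>x T. T > 0 \<and> solves_on f x T \<and> dist (x 0) p < \<delta> \<longrightarrow>
        (\<forall>t\<in>{0..<T}. dist (x t) p \<le> M * exp (- a * t) * dist (x 0) p))"

end

theory Submission
  imports Defs
begin

text \<open>
  With the weights \<open>w_j = 2 C r_j^2 / \<kappa>_j\<close> the dynamics read \<open>w_j \<theta>_j' = r_j F_j(\<theta>)\<close>,
  where \<open>F_j\<close> is the bracket of the vector field. Pairing \<open>F(\<theta>) - F(p)\<close> with \<open>u = \<theta> - p\<close>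
  and using the symmetry of \<open>g\<close> splits the result into a load part
  \<open>\<Sum>_j r_j \<iota>_j u_j (sin(\<theta>_j - \<gamma>_j) - sin(p_j - \<gamma>_j))\<close> and a coupling part
  \<open>-1/2 \<Sum>_jl g_jl r_j r_l (u_j - u_l) (sin(\<theta>_j - \<theta>_l) - sin(p_j - p_l))\<close>.
  Near \<open>p\<close>, the sign conditions \<open>cos(p_j - \<gamma>_j) < 0\<close> and \<open>cos(p_j - p_l) > 0\<close> bound both
  parts by a negative multiple of the quadratic form
  \<open>D(u) = \<Sum>_j r_j \<iota>_j u_j^2 + 1/2 \<Sum>_jl g_jl r_j r_l (u_j - u_l)^2\<close>.
  On a connected network \<open>D\<close> vanishes only on constant vectors that are zero at every
  loaded node, so it is coercive on the whole space when some \<open>\<iota>_j > 0\<close>, and on the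
  hyperplane of vectors with weighted mean zero otherwise. Hence the weighted energy
  \<open>1/2 \<Sum>_j w_j u_j^2\<close> of \<open>u = \<theta> - \<theta>_eq\<close>, resp. of the deviation of \<open>\<theta>\<close> from its weighted
  mean (which, without loads, is itself an equilibrium), is a strict Lyapunov function
  comparable to the squared distance to the target set, and so decays exponentially.
\<close>


lemma sin_add_diff_eq_mult_cos:
  fixes p d :: real
  obtains z where "\<bar>z - p\<bar> \<le> \<bar>d\<bar>" "sin (p + d) - sin p = d * cos z"
proof (cases d "0::real" rule: linorder_cases)
  case less
  then obtain z where "p + d < z" "z < p" "sin p - sin (p + d) = (p - (p + d)) * cos z"
    using MVT2[of "p + d" p sin cos] by (auto intro: DERIV_sin)
  then show ?thesis by (intro that[of z]) (auto simp: algebra_simps)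
next
  case equal
  then show ?thesis by (intro that[of p]) auto
next
  case greater
  then obtain z where "p < z" "z < p + d" "sin (p + d) - sin p = (p + d - p) * cos z"
    using MVT2[of p "p + d" sin cos] by (auto intro: DERIV_sin)
  then show ?thesis by (intro that[of z]) auto
qed

lemma cos_ge_cos_minus_dist: "cos p - \<bar>z - p\<bar> \<le> cos (z::real)"
proof -
  have "\<bar>cos z - cos p\<bar> = 2 * \<bar>sin ((z + p) / 2)\<bar> * \<bar>sin ((p - z) / 2)\<bar>"
    by (simp add: cos_diff_cos abs_mult)
  also have "\<dots> \<le> 2 * 1 * \<bar>(p - z) / 2\<bar>"
    by (intro mult_mono abs_sin_x_le_abs_x) auto
  finally show ?thesis by simp
qed

lemma sin_add_diff_mult_ge:
  fixes p d c :: real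
  assumes "c \<le> cos p" "\<bar>d\<bar> \<le> c / 2"
  shows "c / 2 * d\<^sup>2 \<le> (sin (p + d) - sin p) * d"
proof -
  obtain z where z: "\<bar>z - p\<bar> \<le> \<bar>d\<bar>" "sin (p + d) - sin p = d * cos z"
    using sin_add_diff_eq_mult_cos .
  have "c / 2 \<le> cos z" using cos_ge_cos_minus_dist[of p z] z(1) assms by linarith
  then have "d\<^sup>2 * (c / 2) \<le> d\<^sup>2 * cos z" by (intro mult_left_mono) auto
  then show ?thesis using z(2) by (simp add: power2_eq_square algebra_simps)
qed

lemma sin_add_diff_mult_le:
  fixes p d c :: real
  assumes "cos p \<le> - c" "\<bar>d\<bar> \<le> c / 2"
  shows "(sin (p + d) - sin p) * d \<le> - (c / 2 * d\<^sup>2)"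
proof -
  have "c / 2 * d\<^sup>2 \<le> (sin (p + pi + d) - sin (p + pi)) * d"
    using assms by (intro sin_add_diff_mult_ge) auto
  moreover have "sin (p + pi + d) = - sin (p + d)"
    by (metis add.commute add.left_commute sin_periodic_pi)
  ultimately show ?thesis by (simp add: algebra_simps)
qed

lemma has_real_derivative_along:
  assumes "(V has_derivative V') (at (x t))" "(x has_vector_derivative D) (at t within s)"
  shows "((\<lambda>t. V (x t)) has_real_derivative V' D) (at t within s)"
proof -
  have "((\<lambda>t. V (x t)) has_derivative (\<lambda>h. V' (h *\<^sub>R D))) (at t within s)"
    using has_derivative_compose[OF assms(2)[unfolded has_vector_derivative_def] assms(1)] .
  moreover have "V' (h *\<^sub>R D) = V' D * h" for h
    using has_derivative_bounded_linear[OF assms(1)] by (simp add: linear_simps)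
  ultimately show ?thesis by (simp add: has_field_derivative_def)
qed

lemma exp_decay_of_deriv_le:
  fixes v v' :: "real \<Rightarrow> real"
  assumes "0 \<le> t" "continuous_on {0..t} v"
    and deriv: "\<And>s. 0 < s \<Longrightarrow> s < t \<Longrightarrow> (v has_real_derivative v' s) (at s)"
    and decay: "\<And>s. 0 < s \<Longrightarrow> s < t \<Longrightarrow> v' s \<le> - c * v s"
  shows "v t \<le> exp (- c * t) * v 0"
proof -
  have "exp (c * t) * v t \<le> exp (c * 0) * v 0"
  proof (rule DERIV_nonpos_imp_decreasing_open[OF \<open>0 \<le> t\<close>])
    fix s assume s: "0 < s" "s < t"
    have "((\<lambda>s. exp (c * s) * v s) has_real_derivative exp (c * s) * (v' s + c * v s)) (at s)"
      by (auto intro!: derivative_eq_intros deriv s simp: algebra_simps)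
    moreover have "exp (c * s) * (v' s + c * v s) \<le> 0"
      using decay[OF s] by (simp add: mult_nonneg_nonpos)
    ultimately show "\<exists>y. ((\<lambda>s. exp (c * s) * v s) has_real_derivative y) (at s) \<and> y \<le> 0"
      by blast
  qed (intro continuous_intros assms(2))
  then show ?thesis by (simp add: exp_minus field_simps)
qed

lemma continuous_on_stays_below:
  fixes v :: "real \<Rightarrow> real"
  assumes cont: "continuous_on {0..<T} v"
    and step: "\<And>t. t \<in> {0..<T} \<Longrightarrow> (\<And>s. s \<in> {0..<t} \<Longrightarrow> v s < L) \<Longrightarrow> v t < L"
    and s: "s \<in> {0..<T}"
  shows "v s < L"
proof (rule ccontr)
  assume "\<not> v s < L"
  define K where "K = {0..s} \<inter> v -` {L..}"
  have "closed K" unfolding K_def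
    by (intro continuous_closed_preimage continuous_on_subset[OF cont]) (use s in auto)
  moreover have sK: "s \<in> K" using \<open>\<not> v s < L\<close> s by (simp add: K_def)
  moreover have bdd: "bdd_below K" by (rule bdd_belowI[of _ 0]) (simp add: K_def)
  ultimately have "Inf K \<in> K" using closed_contains_Inf by blast
  then have first: "Inf K \<in> {0..<T}" "L \<le> v (Inf K)" using s by (auto simp: K_def)
  have "Inf K \<le> s" using cInf_lower[OF sK bdd] .
  have "v r < L" if r: "r \<in> {0..<Inf K}" for r
  proof (rule ccontr)
    assume "\<not> v r < L"
    then have "r \<in> K" using r \<open>Inf K \<le> s\<close> by (simp add: K_def)
    then show False using cInf_lower[OF _ bdd] r by fastforce
  qed
  then have "v (Inf K) < L" by (rule step[OF first(1)])
  then show False using first(2) by simp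
qed

lemma exp_decay_below_threshold:
  fixes v v' :: "real \<Rightarrow> real"
  assumes deriv: "\<And>t. t \<in> {0..<T} \<Longrightarrow> (v has_real_derivative v' t) (at t within {0..<T})"
    and decay: "\<And>t. t \<in> {0..<T} \<Longrightarrow> v t < L \<Longrightarrow> v' t \<le> - c * v t"
    and "0 \<le> c" "0 \<le> v 0" "v 0 < L"
    and t: "t \<in> {0..<T}"
  shows "v t \<le> exp (- c * t) * v 0"
proof -
  have cont: "continuous_on {0..<T} v"
    unfolding continuous_on_eq_continuous_within using deriv DERIV_continuous by blast
  have bound: "v t1 \<le> exp (- c * t1) * v 0"
    if t1: "t1 \<in> {0..<T}" and below: "\<And>s. s \<in> {0..<t1} \<Longrightarrow> v s < L" for t1
  proof (rule exp_decay_of_deriv_le)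
    show "0 \<le> t1" using t1 by simp
    show "continuous_on {0..t1} v" using t1 by (intro continuous_on_subset[OF cont]) auto
    fix s assume s: "0 < s" "s < t1"
    then have "at s within {0..<T} = at s" using t1 by (intro at_within_interior) auto
    then show "(v has_real_derivative v' s) (at s)" using deriv[of s] s t1 by simp
    show "v' s \<le> - c * v s" using decay[of s] below[of s] s t1 by simp
  qed
  have below: "v s < L" if "s \<in> {0..<T}" for s
  proof (rule continuous_on_stays_below[OF cont _ that])
    fix t1 assume "t1 \<in> {0..<T}" "\<And>s. s \<in> {0..<t1} \<Longrightarrow> v s < L"
    then have "v t1 \<le> exp (- c * t1) * v 0" by (rule bound)
    also have "\<dots> \<le> v 0" using \<open>t1 \<in> {0..<T}\<close> assms(3,4) by (intro mult_left_le_one_le) auto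
    finally show "v t1 < L" using \<open>v 0 < L\<close> by simp
  qed
  show ?thesis using t below by (intro bound) auto
qed

lemma lyapunov_loc_exp_stable_set:
  fixes f :: "'a::real_normed_vector \<Rightarrow> 'a" and V :: "'a \<Rightarrow> real"
  assumes V_deriv: "\<And>\<theta>. (V has_derivative V' \<theta>) (at \<theta>)"
    and V_lower: "\<And>\<theta>. \<alpha> * (infdist \<theta> S)\<^sup>2 \<le> V \<theta>"
    and V_upper: "\<And>\<theta>. V \<theta> \<le> \<beta> * (infdist \<theta> S)\<^sup>2"
    and V_decay: "\<And>\<theta>. V \<theta> < L \<Longrightarrow> V' \<theta> (f \<theta>) \<le> - c * V \<theta>"
    and pos: "0 < \<alpha>" "0 < \<beta>" "0 < c" "0 < L"
  shows "loc_exp_stable_set f S"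
proof -
  have bound: "infdist (x t) S \<le> sqrt (\<beta> / \<alpha>) * exp (- (c / 2) * t) * infdist (x 0) S"
    if sol: "solves_on f x T" and near: "infdist (x 0) S < sqrt (L / \<beta>)" and t: "t \<in> {0..<T}"
    for x T t
  proof -
    let ?d = "\<lambda>t. infdist (x t) S"
    have "V (x 0) \<le> \<beta> * (?d 0)\<^sup>2" by (rule V_upper)
    also have "\<dots> < \<beta> * (sqrt (L / \<beta>))\<^sup>2"
      using near pos by (intro mult_strict_left_mono power_strict_mono) (auto simp: infdist_nonneg)
    finally have V0_below: "V (x 0) < L" using pos by simp
    have "0 \<le> \<alpha> * (?d 0)\<^sup>2" using pos by simp
    then have V0_nonneg: "0 \<le> V (x 0)" using V_lower[of "x 0"] by linarith
    have deriv: "((\<lambda>t. V (x t)) has_real_derivative V' (x t) (f (x t))) (at t within {0..<T})"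
      if "t \<in> {0..<T}" for t
      using has_real_derivative_along[OF V_deriv] sol that by (simp add: solves_on_def)
    have "V (x t) \<le> exp (- c * t) * V (x 0)"
      using pos by (intro exp_decay_below_threshold[OF deriv V_decay _ V0_nonneg V0_below t]) auto
    also have "\<dots> \<le> exp (- c * t) * (\<beta> * (?d 0)\<^sup>2)" by (simp add: V_upper)
    finally have "\<alpha> * (?d t)\<^sup>2 \<le> exp (- c * t) * (\<beta> * (?d 0)\<^sup>2)"
      using V_lower[of "x t"] by linarith
    moreover have "(exp (- (c / 2) * t))\<^sup>2 = exp (- c * t)"
      by (simp flip: exp_double)
    ultimately have "(?d t)\<^sup>2 \<le> (sqrt (\<beta> / \<alpha>) * exp (- (c / 2) * t) * ?d 0)\<^sup>2"
      using pos by (simp add: power_mult_distrib field_simps)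
    then show ?thesis
      by (rule power2_le_imp_le) (use pos in \<open>simp add: infdist_nonneg\<close>)
  qed
  moreover have "0 < sqrt (L / \<beta>)" "0 < c / 2" using pos by auto
  ultimately show ?thesis unfolding loc_exp_stable_set_def by blast
qed

lemma loc_exp_stable_point_iff_set: "loc_exp_stable_point f p \<longleftrightarrow> loc_exp_stable_set f {p}"
  by (simp add: loc_exp_stable_point_def loc_exp_stable_set_def)

lemma homogeneous_coercive_on_cone:
  fixes Q :: "'a::euclidean_space \<Rightarrow> real"
  assumes cont: "continuous_on UNIV Q" and hom: "\<And>c u. Q (c *\<^sub>R u) = c\<^sup>2 * Q u"
    and K: "closed K" "\<And>c u. u \<in> K \<Longrightarrow> c *\<^sub>R u \<in> K"
    and pos: "\<And>u. u \<in> K \<Longrightarrow> u \<noteq> 0 \<Longrightarrow> 0 < Q u"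
  obtains \<mu> where "0 < \<mu>" "\<And>u. u \<in> K \<Longrightarrow> \<mu> * (norm u)\<^sup>2 \<le> Q u"
proof (cases "sphere 0 1 \<inter> K = {}")
  case True
  have "u = 0" if "u \<in> K" for u
  proof (rule ccontr)
    assume "u \<noteq> 0"
    then have "(1 / norm u) *\<^sub>R u \<in> sphere 0 1 \<inter> K" using K(2)[OF that] by simp
    then show False using True by blast
  qed
  then show ?thesis using hom[of 0 0] by (intro that[of 1]) force+
next
  case False
  have "compact (sphere 0 1 \<inter> K)" using K(1) by (intro compact_Int_closed) auto
  then obtain e where e: "e \<in> sphere 0 1 \<inter> K" "\<And>y. y \<in> sphere 0 1 \<inter> K \<Longrightarrow> Q e \<le> Q y"
    using continuous_attains_inf[OF _ False continuous_on_subset[OF cont]] by auto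
  show ?thesis
  proof (rule that[of "Q e"])
    show "0 < Q e" using e(1) by (intro pos) auto
    fix u assume u: "u \<in> K"
    show "Q e * (norm u)\<^sup>2 \<le> Q u"
    proof (cases "u = 0")
      case True then show ?thesis using hom[of 0 0] by simp
    next
      case False
      then have "Q e \<le> Q ((1 / norm u) *\<^sub>R u)" using e(2) K(2)[OF u] by simp
      also have "\<dots> = Q u / (norm u)\<^sup>2" using hom by (simp add: power_divide)
      finally show ?thesis using False by (simp add: field_simps)
    qed
  qed
qed

lemma finite_range_pos_lower_bound:
  fixes h :: "'a::finite \<Rightarrow> real"
  assumes "\<And>x. 0 < h x"
  obtains c where "0 < c" "\<And>x. c \<le> h x"
  using assms by (intro that[of "Min (range h)"]) auto

lemma sum_sum_antisym_half:
  fixes A s :: "'a::finite \<Rightarrow> 'a \<Rightarrow> real"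
  assumes "\<And>j l. A j l = A l j" "\<And>j l. s j l = - s l j"
  shows "(\<Sum>j\<in>UNIV. \<Sum>l\<in>UNIV. A j l * u j * s j l)
       = (\<Sum>j\<in>UNIV. \<Sum>l\<in>UNIV. A j l * (u j - u l) * s j l) / 2"
proof -
  have "(\<Sum>j\<in>UNIV. \<Sum>l\<in>UNIV. A j l * u l * s j l) = (\<Sum>l\<in>UNIV. \<Sum>j\<in>UNIV. A j l * u l * s j l)"
    by (rule sum.swap)
  also have "\<dots> = (\<Sum>l\<in>UNIV. \<Sum>j\<in>UNIV. - (A l j * u l * s l j))"
    using assms by (intro sum.cong refl) (metis mult_minus_right)
  also have "\<dots> = - (\<Sum>j\<in>UNIV. \<Sum>l\<in>UNIV. A j l * u j * s j l)"
    by (simp add: sum_negf)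
  finally show ?thesis by (simp add: algebra_simps sum_subtractf)
qed

lemma rtranclp_eq_if_edges_eq:
  assumes "R\<^sup>*\<^sup>* j l" "\<And>a b. R a b \<Longrightarrow> u a = u b"
  shows "u j = u l"
  using assms(1) by induction (use assms(2) in auto)

locale phase_network =
  fixes C :: real and \<kappa> r \<iota> \<gamma> :: "'n::finite \<Rightarrow> real" and g :: "'n \<Rightarrow> 'n \<Rightarrow> real"
  assumes C_pos: "0 < C" and \<kappa>_pos: "\<And>j. 0 < \<kappa> j" and r_pos: "\<And>j. 0 < r j"
    and g_sym: "\<And>j l. g j l = g l j" and g_nonneg: "\<And>j l. 0 \<le> g j l"
    and connected: "\<And>j l. (\<lambda>a b. 0 < g a b)\<^sup>*\<^sup>* j l"
    and \<iota>_nonneg: "\<And>j. 0 \<le> \<iota> j"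
begin

abbreviation field :: "real^'n \<Rightarrow> real^'n" where
  "field \<equiv> phase_field C \<kappa> r g \<iota> \<gamma>"

definition mismatch :: "real^'n \<Rightarrow> 'n \<Rightarrow> real" where
  "mismatch \<theta> j = \<iota> j * sin (\<theta>$j - \<gamma> j) - (\<Sum>l\<in>UNIV. g j l * r l * sin (\<theta>$j - \<theta>$l))"

definition weight :: "'n \<Rightarrow> real" where
  "weight j = 2 * C * (r j)\<^sup>2 / \<kappa> j"

lemma weight_pos: "0 < weight j"
  using C_pos r_pos[of j] \<kappa>_pos[of j] by (simp add: weight_def)

lemma weight_mult_field: "weight j * field \<theta> $ j = r j * mismatch \<theta> j"
proof -
  have "(\<Sum>l\<in>UNIV - {j}. g j l * r l * sin (\<theta>$j - \<theta>$l)) = (\<Sum>l\<in>UNIV. g j l * r l * sin (\<theta>$j - \<theta>$l))"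
    by (subst sum.remove[of UNIV j]) auto
  then show ?thesis
    using C_pos r_pos[of j] \<kappa>_pos[of j]
    by (simp add: phase_field_def mismatch_def weight_def power2_eq_square field_simps)
qed

lemma mismatch_eq_0_if_field_eq_0: "field \<theta> = 0 \<Longrightarrow> mismatch \<theta> j = 0"
  using weight_mult_field[of j \<theta>] r_pos[of j] by simp

definition energy :: "real^'n \<Rightarrow> real" where
  "energy u = (\<Sum>j\<in>UNIV. weight j * (u$j)\<^sup>2) / 2"

lemma has_derivative_energy [derivative_intros]:
  assumes "(f has_derivative f') (at x within s)"
  shows "((\<lambda>x. energy (f x)) has_derivative (\<lambda>h. \<Sum>j\<in>UNIV. weight j * f x $ j * f' h $ j))
    (at x within s)"
proof -
  have "(energy has_derivative (\<lambda>h. \<Sum>j\<in>UNIV. weight j * f x $ j * h $ j)) (at (f x))"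
    unfolding energy_def
    by (auto intro!: derivative_eq_intros bounded_linear.has_derivative[OF bounded_linear_vec_nth]
        simp: sum_divide_distrib ac_simps)
  from has_derivative_compose[OF assms this] show ?thesis .
qed

definition energy_lb :: real where "energy_lb = Min (range weight) / 2"
definition energy_ub :: real where "energy_ub = Max (range weight) / 2"

lemma energy_lb_pos: "0 < energy_lb"
  using weight_pos by (simp add: energy_lb_def)

lemma energy_ub_pos: "0 < energy_ub"
  using weight_pos by (simp add: energy_ub_def Max_gr_iff)

lemma energy_bounds: "energy_lb * (norm u)\<^sup>2 \<le> energy u" "energy u \<le> energy_ub * (norm u)\<^sup>2"
proof -
  have norm_sq: "(norm u)\<^sup>2 = (\<Sum>j\<in>UNIV. (u$j)\<^sup>2)"
    unfolding norm_vec_def L2_set_def by (simp add: sum_nonneg)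
  show "energy_lb * (norm u)\<^sup>2 \<le> energy u" "energy u \<le> energy_ub * (norm u)\<^sup>2"
    unfolding energy_def energy_lb_def energy_ub_def norm_sq sum_distrib_left
    by (auto intro!: sum_mono mult_right_mono simp: sum_divide_distrib)
qed

definition dissipation :: "real^'n \<Rightarrow> real" where
  "dissipation u = (\<Sum>j\<in>UNIV. r j * \<iota> j * (u$j)\<^sup>2)
     + (\<Sum>j\<in>UNIV. \<Sum>l\<in>UNIV. g j l * r j * r l * (u$j - u$l)\<^sup>2) / 2"

lemma load_term_nonneg: "0 \<le> r j * \<iota> j * (u$j)\<^sup>2"
  using r_pos[of j] \<iota>_nonneg[of j] by simp

lemma coupling_term_nonneg: "0 \<le> g j l * r j * r l * (u$j - u$l)\<^sup>2"
  using g_nonneg[of j l] r_pos[of j] r_pos[of l] by simp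

lemma dissipation_nonneg: "0 \<le> dissipation u"
  unfolding dissipation_def
  by (intro add_nonneg_nonneg divide_nonneg_pos sum_nonneg load_term_nonneg coupling_term_nonneg) auto

lemma dissipation_eq_0D:
  assumes "dissipation u = 0"
  shows "u$j = u$l" and "0 < \<iota> j \<Longrightarrow> u$j = 0"
proof -
  have load: "(\<Sum>j\<in>UNIV. r j * \<iota> j * (u$j)\<^sup>2) = 0"
    and coupling: "(\<Sum>j\<in>UNIV. \<Sum>l\<in>UNIV. g j l * r j * r l * (u$j - u$l)\<^sup>2) = 0"
    using assms load_term_nonneg coupling_term_nonneg
    by (simp_all add: dissipation_def add_nonneg_eq_0_iff sum_nonneg)
  have edge_term: "g a b * r a * r b * (u$a - u$b)\<^sup>2 = 0" for a b
    using coupling by (simp add: sum_nonneg_eq_0_iff sum_nonneg coupling_term_nonneg)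
  have "u$a = u$b" if "0 < g a b" for a b
    using edge_term[of a b] that r_pos[of a] r_pos[of b] by simp
  then show "u$j = u$l" using rtranclp_eq_if_edges_eq[OF connected, where u = "\<lambda>i. u$i"] by blast
  show "u$j = 0" if "0 < \<iota> j"
    using load that r_pos[of j] by (force simp: sum_nonneg_eq_0_iff load_term_nonneg)
qed

lemma dissipation_coercive:
  assumes "closed K" "\<And>c u. u \<in> K \<Longrightarrow> c *\<^sub>R u \<in> K"
    and "\<And>u. u \<in> K \<Longrightarrow> (\<And>j l. u$j = u$l) \<Longrightarrow> (\<And>j. 0 < \<iota> j \<Longrightarrow> u$j = 0) \<Longrightarrow> u = 0"
  obtains \<mu> where "0 < \<mu>" "\<And>u. u \<in> K \<Longrightarrow> \<mu> * (norm u)\<^sup>2 \<le> dissipation u"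
proof (rule homogeneous_coercive_on_cone)
  show "continuous_on UNIV dissipation"
    unfolding dissipation_def by (intro continuous_intros) auto
  show "dissipation (c *\<^sub>R u) = c\<^sup>2 * dissipation u" for c u
  proof -
    have "(c * u$j - c * u$l)\<^sup>2 = c\<^sup>2 * (u$j - u$l)\<^sup>2" for j l
      by (simp add: power2_eq_square algebra_simps)
    then show ?thesis
      unfolding dissipation_def by (simp add: power_mult_distrib sum_distrib_left algebra_simps)
  qed
  show "0 < dissipation u" if "u \<in> K" "u \<noteq> 0" for u
    using assms(3)[OF that(1) dissipation_eq_0D] that(2) dissipation_nonneg[of u]
    by (auto simp: order_le_less)
qed (use assms that in auto)

lemma mismatch_pairing:
  "(\<Sum>j\<in>UNIV. r j * u j * (mismatch \<theta> j - mismatch p j))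
   = (\<Sum>j\<in>UNIV. r j * \<iota> j * u j * (sin (\<theta>$j - \<gamma> j) - sin (p$j - \<gamma> j)))
     - (\<Sum>j\<in>UNIV. \<Sum>l\<in>UNIV. g j l * r j * r l * (u j - u l)
          * (sin (\<theta>$j - \<theta>$l) - sin (p$j - p$l))) / 2"
proof -
  let ?A = "\<lambda>j l. g j l * r j * r l"
  let ?s = "\<lambda>j l. sin (\<theta>$j - \<theta>$l) - sin (p$j - p$l)"
  have sin_antisym: "sin (x - y) = - sin (y - x)" for x y :: real
    by (metis minus_diff_eq sin_minus)
  have "?s j l = - ?s l j" for j l
    using sin_antisym[of "\<theta>$j"] sin_antisym[of "p$j"] by simp
  then have "(\<Sum>j\<in>UNIV. \<Sum>l\<in>UNIV. ?A j l * u j * ?s j l)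
      = (\<Sum>j\<in>UNIV. \<Sum>l\<in>UNIV. ?A j l * (u j - u l) * ?s j l) / 2"
    by (intro sum_sum_antisym_half) (simp_all add: g_sym)
  moreover have "(\<Sum>j\<in>UNIV. r j * u j * (mismatch \<theta> j - mismatch p j))
      = (\<Sum>j\<in>UNIV. r j * \<iota> j * u j * (sin (\<theta>$j - \<gamma> j) - sin (p$j - \<gamma> j)))
        - (\<Sum>j\<in>UNIV. \<Sum>l\<in>UNIV. ?A j l * u j * ?s j l)"
    unfolding mismatch_def
    by (simp add: algebra_simps sum_subtractf sum_distrib_left sum.distrib)
  ultimately show ?thesis by simp
qed

lemma load_pairing_le:
  assumes anti: "0 < \<iota> j \<Longrightarrow> cos (p$j - \<gamma> j) \<le> - c1"
    and near: "\<bar>(\<theta> - p)$j\<bar> \<le> c1 / 2" and "m \<le> c1"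
  shows "r j * \<iota> j * (\<theta> - p)$j * (sin (\<theta>$j - \<gamma> j) - sin (p$j - \<gamma> j))
    \<le> - (m / 2 * (r j * \<iota> j * ((\<theta> - p)$j)\<^sup>2))"
proof (cases "\<iota> j = 0")
  case False
  let ?d = "(\<theta> - p)$j"
  have "(sin (p$j - \<gamma> j + ?d) - sin (p$j - \<gamma> j)) * ?d \<le> - (c1 / 2 * ?d\<^sup>2)"
    using False \<iota>_nonneg[of j] near by (intro sin_add_diff_mult_le anti) auto
  also have "\<dots> \<le> - (m / 2 * ?d\<^sup>2)" using \<open>m \<le> c1\<close> by (simp add: mult_right_mono)
  finally have "(r j * \<iota> j) * ((sin (\<theta>$j - \<gamma> j) - sin (p$j - \<gamma> j)) * ?d)
      \<le> (r j * \<iota> j) * - (m / 2 * ?d\<^sup>2)"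
    using r_pos[of j] \<iota>_nonneg[of j] by (intro mult_left_mono) (simp_all add: algebra_simps)
  then show ?thesis by (simp add: algebra_simps)
qed simp

lemma coupling_pairing_ge:
  assumes close: "c2 \<le> cos (p$j - p$l)"
    and near: "\<bar>(\<theta> - p)$j\<bar> \<le> c2 / 4" "\<bar>(\<theta> - p)$l\<bar> \<le> c2 / 4" and "m \<le> c2"
  shows "m / 2 * (g j l * r j * r l * ((\<theta> - p)$j - (\<theta> - p)$l)\<^sup>2)
    \<le> g j l * r j * r l * ((\<theta> - p)$j - (\<theta> - p)$l) * (sin (\<theta>$j - \<theta>$l) - sin (p$j - p$l))"
proof -
  let ?d = "(\<theta> - p)$j - (\<theta> - p)$l"
  have "\<bar>?d\<bar> \<le> c2 / 2" using near abs_triangle_ineq4[of "(\<theta> - p)$j" "(\<theta> - p)$l"] by linarith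
  then have "c2 / 2 * ?d\<^sup>2 \<le> (sin (p$j - p$l + ?d) - sin (p$j - p$l)) * ?d"
    by (intro sin_add_diff_mult_ge close)
  moreover have "p$j - p$l + ?d = \<theta>$j - \<theta>$l" by simp
  moreover have "m / 2 * ?d\<^sup>2 \<le> c2 / 2 * ?d\<^sup>2" using \<open>m \<le> c2\<close> by (simp add: mult_right_mono)
  ultimately have "m / 2 * ?d\<^sup>2 \<le> (sin (\<theta>$j - \<theta>$l) - sin (p$j - p$l)) * ?d" by simp
  then have "(g j l * r j * r l) * (m / 2 * ?d\<^sup>2)
      \<le> (g j l * r j * r l) * ((sin (\<theta>$j - \<theta>$l) - sin (p$j - p$l)) * ?d)"
    using g_nonneg[of j l] r_pos[of j] r_pos[of l] by (intro mult_left_mono) simp_all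
  then show ?thesis by (simp add: algebra_simps)
qed

lemma field_pairing_le_dissipation:
  assumes equilibrium: "\<And>j. mismatch p j = 0"
    and close: "\<And>j l. c2 \<le> cos (p$j - p$l)"
    and anti: "\<And>j. 0 < \<iota> j \<Longrightarrow> cos (p$j - \<gamma> j) \<le> - c1"
    and near: "\<And>j. \<bar>(\<theta> - p)$j\<bar> \<le> min (c1 / 2) (c2 / 4)"
  shows "(\<Sum>j\<in>UNIV. weight j * (\<theta> - p)$j * field \<theta> $ j) \<le> - (min c1 c2 / 2) * dissipation (\<theta> - p)"
proof -
  let ?m = "min c1 c2" and ?u = "\<theta> - p"
  have pointwise: "weight j * ?u$j * field \<theta> $ j = r j * ?u$j * (mismatch \<theta> j - mismatch p j)" for j
  proof -
    have "weight j * ?u$j * field \<theta> $ j = ?u$j * (weight j * field \<theta> $ j)" by (simp only: mult_ac)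
    then show ?thesis by (simp add: weight_mult_field equilibrium mult_ac)
  qed
  have "(\<Sum>j\<in>UNIV. weight j * ?u$j * field \<theta> $ j)
      = (\<Sum>j\<in>UNIV. r j * ?u$j * (mismatch \<theta> j - mismatch p j))"
    by (simp only: pointwise)
  also have "\<dots> = (\<Sum>j\<in>UNIV. r j * \<iota> j * ?u$j * (sin (\<theta>$j - \<gamma> j) - sin (p$j - \<gamma> j)))
     - (\<Sum>j\<in>UNIV. \<Sum>l\<in>UNIV.
          g j l * r j * r l * (?u$j - ?u$l) * (sin (\<theta>$j - \<theta>$l) - sin (p$j - p$l))) / 2"
    by (rule mismatch_pairing)
  also have "\<dots> \<le> (\<Sum>j\<in>UNIV. - (?m / 2 * (r j * \<iota> j * (?u$j)\<^sup>2)))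
     - (\<Sum>j\<in>UNIV. \<Sum>l\<in>UNIV. ?m / 2 * (g j l * r j * r l * (?u$j - ?u$l)\<^sup>2)) / 2"
    using near
    by (intro diff_mono divide_right_mono sum_mono load_pairing_le[OF anti] coupling_pairing_ge[OF close])
      (auto simp: min_le_iff_disj)
  also have "\<dots> = - (?m / 2) * dissipation ?u"
    by (simp add: dissipation_def sum_distrib_left sum_negf algebra_simps)
  finally show ?thesis .
qed

lemma field_pairing_le_energy:
  assumes "\<And>j. mismatch p j = 0" "0 < c1" "0 < c2"
    and "\<And>j l. c2 \<le> cos (p$j - p$l)" "\<And>j. 0 < \<iota> j \<Longrightarrow> cos (p$j - \<gamma> j) \<le> - c1"
    and coercive: "0 \<le> \<mu>" "\<mu> * (norm (\<theta> - p))\<^sup>2 \<le> dissipation (\<theta> - p)"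
    and small: "energy (\<theta> - p) < energy_lb * (min (c1 / 2) (c2 / 4))\<^sup>2"
  shows "(\<Sum>j\<in>UNIV. weight j * (\<theta> - p)$j * field \<theta> $ j)
    \<le> - (min c1 c2 * \<mu> / (2 * energy_ub)) * energy (\<theta> - p)"
proof -
  define u where "u = \<theta> - p"
  let ?\<rho> = "min (c1 / 2) (c2 / 4)" and ?m = "min c1 c2"
  have "energy_lb * (norm u)\<^sup>2 < energy_lb * ?\<rho>\<^sup>2"
    using energy_bounds(1)[of u] small unfolding u_def by linarith
  then have "(norm u)\<^sup>2 < ?\<rho>\<^sup>2" using energy_lb_pos by simp
  then have "norm u < ?\<rho>" by (rule power2_less_imp_less) (use assms(2,3) in simp)
  then have "\<bar>(\<theta> - p)$j\<bar> \<le> ?\<rho>" for j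
    using component_le_norm_cart[of u j] unfolding u_def by linarith
  then have "(\<Sum>j\<in>UNIV. weight j * (\<theta> - p)$j * field \<theta> $ j) \<le> - (?m / 2) * dissipation u"
    using field_pairing_le_dissipation[OF assms(1,4,5)] unfolding u_def by blast
  also have "\<dots> \<le> - (?m / 2) * (\<mu> * (norm u)\<^sup>2)"
    using coercive(2) assms(2,3) unfolding u_def by (intro mult_left_mono_neg) auto
  also have "\<dots> \<le> - (?m / 2) * (\<mu> * (energy u / energy_ub))"
  proof -
    have "energy u / energy_ub \<le> (norm u)\<^sup>2"
      using energy_bounds(2)[of u] energy_ub_pos by (simp add: divide_le_eq mult.commute)
    then show ?thesis using coercive(1) assms(2,3) by (intro mult_left_mono_neg mult_left_mono) auto
  qed
  also have "\<dots> = - (?m * \<mu> / (2 * energy_ub)) * energy u" by simp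
  finally show ?thesis by (simp add: u_def)
qed

lemma loc_exp_stable_equilibrium:
  assumes "field p = 0" and close: "\<And>j l. 0 < cos (p$j - p$l)"
    and anti: "\<And>j. cos (p$j - \<gamma> j) < 0" and "0 < \<iota> j0"
  shows "loc_exp_stable_point field p"
proof -
  obtain c1 where c1: "0 < c1" "\<And>j. c1 \<le> - cos (p$j - \<gamma> j)"
    using finite_range_pos_lower_bound[of "\<lambda>j. - cos (p$j - \<gamma> j)"] anti by auto
  obtain c2 where c2: "0 < c2" "\<And>jl. c2 \<le> cos (p $ fst jl - p $ snd jl)"
    using finite_range_pos_lower_bound[of "\<lambda>jl. cos (p $ fst jl - p $ snd jl)"] close by auto
  have anti': "cos (p$j - \<gamma> j) \<le> - c1" for j using c1(2)[of j] by linarith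
  have close': "c2 \<le> cos (p$j - p$l)" for j l using c2(2)[of "(j, l)"] by simp
  obtain \<mu> where \<mu>: "0 < \<mu>" "\<And>u. \<mu> * (norm u)\<^sup>2 \<le> dissipation u"
  proof (rule dissipation_coercive[of UNIV])
    fix u :: "real^'n" assume "\<And>j l. u$j = u$l" "\<And>j. 0 < \<iota> j \<Longrightarrow> u$j = 0"
    then show "u = 0" using \<open>0 < \<iota> j0\<close> by (metis vec_eq_iff zero_index)
  qed auto
  have mismatch_p: "mismatch p j = 0" for j
    using \<open>field p = 0\<close> by (rule mismatch_eq_0_if_field_eq_0)
  have "loc_exp_stable_set field {p}"
  proof (rule lyapunov_loc_exp_stable_set)
    show "((\<lambda>\<theta>. energy (\<theta> - p))
        has_derivative (\<lambda>h. \<Sum>j\<in>UNIV. weight j * (\<theta> - p)$j * h$j)) (at \<theta>)"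
      for \<theta> by (auto intro!: derivative_eq_intros)
    show "energy_lb * (infdist \<theta> {p})\<^sup>2 \<le> energy (\<theta> - p)"
      "energy (\<theta> - p) \<le> energy_ub * (infdist \<theta> {p})\<^sup>2" for \<theta>
      using energy_bounds[of "\<theta> - p"] by (simp_all add: dist_norm)
    show "(\<Sum>j\<in>UNIV. weight j * (\<theta> - p)$j * field \<theta> $ j)
        \<le> - (min c1 c2 * \<mu> / (2 * energy_ub)) * energy (\<theta> - p)"
      if "energy (\<theta> - p) < energy_lb * (min (c1 / 2) (c2 / 4))\<^sup>2" for \<theta>
      using field_pairing_le_energy[OF mismatch_p c1(1) c2(1) close' anti' _ \<mu>(2) that] \<mu>(1) by simp
  qed (use c1 c2 \<mu> energy_lb_pos energy_ub_pos in auto)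
  then show ?thesis by (simp add: loc_exp_stable_point_iff_set)
qed

definition mean :: "real^'n \<Rightarrow> real" where
  "mean \<theta> = (\<Sum>j\<in>UNIV. weight j * \<theta>$j) / (\<Sum>j\<in>UNIV. weight j)"

definition sync :: "real^'n \<Rightarrow> real^'n" where
  "sync \<theta> = (\<chi> j. mean \<theta>)"

lemma weight_sum_pos: "0 < (\<Sum>j\<in>UNIV. weight j)"
  by (simp add: sum_pos weight_pos)

lemma weighted_sum_diff_sync: "(\<Sum>j\<in>UNIV. weight j * (\<theta> - sync \<theta>)$j) = 0"
proof -
  have "(\<Sum>j\<in>UNIV. weight j * mean \<theta>) = (\<Sum>j\<in>UNIV. weight j) * mean \<theta>"
    by (rule sum_distrib_right[symmetric])
  also have "\<dots> = (\<Sum>j\<in>UNIV. weight j * \<theta>$j)"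
    using weight_sum_pos by (simp add: mean_def)
  finally show ?thesis by (simp add: sync_def right_diff_distrib sum_subtractf)
qed

lemma energy_diff_sync_le:
  assumes "s \<in> {\<theta>. \<forall>j l. \<theta>$j = \<theta>$l}"
  shows "energy (\<theta> - sync \<theta>) \<le> energy (\<theta> - s)"
proof -
  define e where "e = \<theta> - sync \<theta>"
  define d where "d = mean \<theta> - s $ undefined"
  have "(\<theta> - s)$j = e$j + d" for j
    using assms by (simp add: e_def d_def sync_def)
  then have "energy (\<theta> - s) = energy e + d * (\<Sum>j\<in>UNIV. weight j * e$j) + d\<^sup>2 / 2 * (\<Sum>j\<in>UNIV. weight j)"
    by (simp add: energy_def power2_eq_square algebra_simps sum.distrib sum_distrib_left
        sum_divide_distrib add_divide_distrib)
  then show ?thesis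
    using weighted_sum_diff_sync[of \<theta>] weight_sum_pos by (simp add: e_def)
qed

lemma bounded_linear_sync: "bounded_linear sync"
proof -
  have "linear sync"
    by (rule linearI) (simp_all add: sync_def mean_def vec_eq_iff algebra_simps sum.distrib sum_distrib_left add_divide_distrib)
  then show ?thesis by (simp only: linear_conv_bounded_linear)
qed

lemmas has_derivative_sync [derivative_intros] = bounded_linear.has_derivative[OF bounded_linear_sync]

lemma loc_exp_stable_synchronized:
  assumes unloaded: "\<And>j. \<iota> j = 0"
  shows "loc_exp_stable_set field {\<theta>. \<forall>j l. \<theta>$j = \<theta>$l}"
proof -
  let ?S = "{\<theta>::real^'n. \<forall>j l. \<theta>$j = \<theta>$l}"
  let ?K = "{u::real^'n. (\<Sum>j\<in>UNIV. weight j * u$j) = 0}"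
  obtain \<mu> where \<mu>: "0 < \<mu>" "\<And>u. u \<in> ?K \<Longrightarrow> \<mu> * (norm u)\<^sup>2 \<le> dissipation u"
  proof (rule dissipation_coercive[of ?K])
    show "closed ?K" by (intro closed_Collect_eq continuous_intros)
    show "c *\<^sub>R u \<in> ?K" if "u \<in> ?K" for c u
      using that by (simp add: algebra_simps flip: sum_distrib_left)
    fix u :: "real^'n" assume u: "u \<in> ?K" and const: "\<And>j l. u$j = u$l"
    define k where "k = u $ undefined"
    have uk: "u$j = k" for j using const by (simp add: k_def)
    then have "k * (\<Sum>j\<in>UNIV. weight j) = 0" using u by (simp add: sum_distrib_left mult.commute)
    then show "u = 0" using weight_sum_pos uk by (simp add: vec_eq_iff)
  qed auto
  have S_closed: "closed ?S"
    by (intro closed_Collect_all closed_Collect_eq continuous_on_id continuous_on_component)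
  have "0 \<in> ?S" by simp
  then have S_nonempty: "?S \<noteq> {}" using equals0D[of ?S 0] by argo
  have mismatch_sync: "mismatch (sync \<theta>) j = 0" for \<theta> j
    by (simp add: mismatch_def sync_def unloaded)
  show ?thesis
  proof (rule lyapunov_loc_exp_stable_set)
    show "((\<lambda>\<theta>. energy (\<theta> - sync \<theta>)) has_derivative
        (\<lambda>h. \<Sum>j\<in>UNIV. weight j * (\<theta> - sync \<theta>)$j * (h - sync h)$j)) (at \<theta>)" for \<theta>
      by (auto intro!: derivative_eq_intros)
    show "energy_lb * (infdist \<theta> ?S)\<^sup>2 \<le> energy (\<theta> - sync \<theta>)" for \<theta>
    proof -
      have "infdist \<theta> ?S \<le> norm (\<theta> - sync \<theta>)"
        using infdist_le[of "sync \<theta>" ?S \<theta>] by (simp add: sync_def dist_norm)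
      then have "energy_lb * (infdist \<theta> ?S)\<^sup>2 \<le> energy_lb * (norm (\<theta> - sync \<theta>))\<^sup>2"
        using energy_lb_pos by (intro mult_left_mono power_mono) (auto simp: infdist_nonneg)
      then show ?thesis using energy_bounds(1) order_trans by blast
    qed
    show "energy (\<theta> - sync \<theta>) \<le> energy_ub * (infdist \<theta> ?S)\<^sup>2" for \<theta>
    proof -
      obtain s where s: "s \<in> ?S" "infdist \<theta> ?S = dist \<theta> s"
        by (rule infdist_attains_inf[OF S_closed S_nonempty])
      have "energy (\<theta> - sync \<theta>) \<le> energy (\<theta> - s)" using s(1) by (rule energy_diff_sync_le)
      also have "\<dots> \<le> energy_ub * (norm (\<theta> - s))\<^sup>2" by (rule energy_bounds(2))
      finally show ?thesis using s(2) by (simp add: dist_norm)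
    qed
    show "(\<Sum>j\<in>UNIV. weight j * (\<theta> - sync \<theta>)$j * (field \<theta> - sync (field \<theta>))$j)
        \<le> - (\<mu> / (2 * energy_ub)) * energy (\<theta> - sync \<theta>)"
      if small: "energy (\<theta> - sync \<theta>) < energy_lb / 16" for \<theta>
    proof -
      \<comment> \<open>\<open>sync (field \<theta>)\<close> is constant and \<open>\<theta> - sync \<theta>\<close> has weighted mean zero.\<close>
      have "(\<Sum>j\<in>UNIV. weight j * (\<theta> - sync \<theta>)$j * (field \<theta> - sync (field \<theta>))$j)
          = (\<Sum>j\<in>UNIV. weight j * (\<theta> - sync \<theta>)$j * field \<theta> $ j)"
        using weighted_sum_diff_sync[of \<theta>]
        by (simp add: sync_def right_diff_distrib sum_subtractf flip: sum_distrib_right)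
      also have "\<dots> \<le> - (min 1 1 * \<mu> / (2 * energy_ub)) * energy (\<theta> - sync \<theta>)"
        using small weighted_sum_diff_sync[of \<theta>] unloaded \<mu>
        by (intro field_pairing_le_energy mismatch_sync) (auto simp: sync_def power2_eq_square)
      finally show ?thesis by simp
    qed
  qed (use \<mu> energy_lb_pos energy_ub_pos in auto)
qed

end

theorem theorem4:
  fixes C :: real and \<kappa> r \<iota> \<gamma> :: "'n::finite \<Rightarrow> real"
    and g :: "'n \<Rightarrow> 'n \<Rightarrow> real" and \<theta>eq :: "real^'n"
  assumes C_pos: "C > 0"
    and \<kappa>_pos: "\<forall>j. \<kappa> j > 0"
    and r_pos: "\<forall>j. r j > 0"
    and g_sym: "\<forall>j l. g j l = g l j"
    and g_nonneg: "\<forall>j l. g j l \<ge> 0"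
    and connected: "\<forall>j l. (\<lambda>a b. g a b > 0)\<^sup>*\<^sup>* j l"
    and \<iota>_nonneg: "\<forall>j. \<iota> j \<ge> 0"
    and equilibrium: "phase_field C \<kappa> r g \<iota> \<gamma> \<theta>eq = 0"
    and close_phases: "\<forall>j l. cos (\<theta>eq$j - \<theta>eq$l) > 0"
    and anti_phase: "\<forall>j. cos (\<theta>eq$j - \<gamma> j) < 0"
  shows "((\<exists>j. \<iota> j > 0) \<longrightarrow> loc_exp_stable_point (phase_field C \<kappa> r g \<iota> \<gamma>) \<theta>eq)
       \<and> ((\<forall>j. \<iota> j = 0) \<longrightarrow>
            loc_exp_stable_set (phase_field C \<kappa> r g \<iota> \<gamma>) {\<theta>. \<forall>j l. \<theta>$j = \<theta>$l})"
proof -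
  interpret phase_network C \<kappa> r \<iota> \<gamma> g
    using assms by unfold_locales auto
  show ?thesis
    using loc_exp_stable_equilibrium[OF equilibrium] loc_exp_stable_synchronized
      close_phases anti_phase by blast
qed

end
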